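(* Let $(E,\rho)$ be a weighted space and $P:\mathscr{B}^\rho(E)\to\mathscr{B}^\rho(E)$ a map. Then $P$ is a smooth operator algebra homomorphism if and only if there is a map $\psi:E\to E$ such that the restriction $\psi|_{K_R}:K_R\to E$ is continuous for every $R>0$, $\sup_{x\in E}\rho(\psi(x))/\rho(x)<\infty$, and $Pf=f\circ\psi$ for all $f\in\mathscr{B}^\rho(E)$. The map $\psi$ is uniquely determined by $P$.
   Context: A weighted space is a pair $(E,\rho)$ where $E$ is a completely regular Hausdorff topological space and $\rho:E\to(0,\infty)$ is an admissible weight function, meaning that for every $R\ge 0$ the sublevel set $K_R:=\{x\in E:\rho(x)\le R\}$ is compact. For $f:E\to\mathbb{R}$ put $\|f\|_\rho:=\sup_{x\in E}|f(x)|/\rho(x)$; $\mathscr{B}^\rho(E)$ denotes the closure of $C_b(E)$ with respect to $\|\cdot\|_\rho$ inside $\{f:E\to\mathbb{R}:\|f\|_\rho<\infty\}$. A continuous linear map $P:\mathscr{B}^\rho(E)\to\mathscr{B}^\rho(E)$ is a smooth operator algebra homomorphism if for every $n$, every bounded smooth $\phi:\mathbb{R}^n\to\mathbb{R}$ and all $f_1,\dots,f_n\in\mathscr{B}^\rho(E)$ one has $P(\phi(f_1(\cdot),\dots,f_n(\cdot)))=\phi(Pf_1(\cdot),\dots,Pf_n(\cdot))$. *)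

theory Defs
  imports "HOL-Analysis.Analysis"
begin

text \<open>The space E is the type 'a with its topology (euclidean :: 'a topology).
  Admissible weight: strictly positive with compact sublevel sets.\<close>

definition admissible_weight :: "('a::topological_space \<Rightarrow> real) \<Rightarrow> bool" where
  "admissible_weight \<rho> \<longleftrightarrow> (\<forall>x. \<rho> x > 0) \<and> (\<forall>R\<ge>0. compact {x. \<rho> x \<le> R})"

definition sublevel :: "('a \<Rightarrow> real) \<Rightarrow> real \<Rightarrow> 'a set" where
  "sublevel \<rho> R = {x. \<rho> x \<le> R}"

definition wfinite :: "('a \<Rightarrow> real) \<Rightarrow> ('a \<Rightarrow> real) \<Rightarrow> bool" where
  "wfinite \<rho> f \<longleftrightarrow> bdd_above (range (\<lambda>x. \<bar>f x\<bar> / \<rho> x))"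

definition wnorm :: "('a \<Rightarrow> real) \<Rightarrow> ('a \<Rightarrow> real) \<Rightarrow> real" where
  "wnorm \<rho> f = (SUP x. \<bar>f x\<bar> / \<rho> x)"

text \<open>B^rho(E): closure of C_b(E) w.r.t. the weighted norm inside the space of
  functions of finite weighted norm.\<close>
definition Brho :: "('a::topological_space \<Rightarrow> real) \<Rightarrow> ('a \<Rightarrow> real) set" where
  "Brho \<rho> = {f. wfinite \<rho> f \<and>
     (\<forall>\<epsilon>>0. \<exists>g. continuous_on UNIV g \<and> bounded (range g) \<and>
        wfinite \<rho> (\<lambda>x. f x - g x) \<and> wnorm \<rho> (\<lambda>x. f x - g x) < \<epsilon>)}"

text \<open>R^n is encoded as the vectors nat => real vanishing at indices >= n
  (product topology on nat => real restricts to the Euclidean topology there).\<close>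
definition Rn :: "nat \<Rightarrow> (nat \<Rightarrow> real) set" where
  "Rn n = {x. \<forall>i\<ge>n. x i = 0}"

fun iter_partial :: "nat list \<Rightarrow> ((nat \<Rightarrow> real) \<Rightarrow> real) \<Rightarrow> (nat \<Rightarrow> real) \<Rightarrow> real" where
  "iter_partial [] \<phi> = \<phi>"
| "iter_partial (i # is) \<phi> = (\<lambda>x. deriv (\<lambda>t. iter_partial is \<phi> (x(i := x i + t))) 0)"

definition smooth_Rn :: "nat \<Rightarrow> ((nat \<Rightarrow> real) \<Rightarrow> real) \<Rightarrow> bool" where
  "smooth_Rn n \<phi> \<longleftrightarrow>
     (\<forall>is. set is \<subseteq> {..<n} \<longrightarrow>
        continuous_on (Rn n) (iter_partial is \<phi>) \<and>
        (\<forall>i<n. \<forall>x\<in>Rn n. (\<lambda>t. iter_partial is \<phi> (x(i := x i + t))) differentiable (at 0)))"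

definition vec_of :: "nat \<Rightarrow> (nat \<Rightarrow> real) \<Rightarrow> (nat \<Rightarrow> real)" where
  "vec_of n v = (\<lambda>i. if i < n then v i else 0)"

definition smooth_op_alg_hom ::
  "('a::topological_space \<Rightarrow> real) \<Rightarrow> (('a \<Rightarrow> real) \<Rightarrow> ('a \<Rightarrow> real)) \<Rightarrow> bool" where
  "smooth_op_alg_hom \<rho> P \<longleftrightarrow>
     (\<forall>f\<in>Brho \<rho>. P f \<in> Brho \<rho>) \<and>
     (\<forall>f\<in>Brho \<rho>. \<forall>g\<in>Brho \<rho>. \<forall>a b::real.
        P (\<lambda>x. a * f x + b * g x) = (\<lambda>x. a * P f x + b * P g x)) \<and>
     (\<forall>f\<in>Brho \<rho>. \<forall>\<epsilon>>0. \<exists>\<delta>>0. \<forall>g\<in>Brho \<rho>.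
        wnorm \<rho> (\<lambda>x. g x - f x) < \<delta> \<longrightarrow> wnorm \<rho> (\<lambda>x. P g x - P f x) < \<epsilon>) \<and>
     (\<forall>n \<phi> fs. smooth_Rn n \<phi> \<and> bounded (\<phi> ` Rn n) \<and> (\<forall>i<n. fs i \<in> Brho \<rho>) \<longrightarrow>
        P (\<lambda>x. \<phi> (vec_of n (\<lambda>i. fs i x))) = (\<lambda>x. \<phi> (vec_of n (\<lambda>i. P (fs i) x))))"

definition composition_rep ::
  "('a::topological_space \<Rightarrow> real) \<Rightarrow> (('a \<Rightarrow> real) \<Rightarrow> ('a \<Rightarrow> real)) \<Rightarrow> ('a \<Rightarrow> 'a) \<Rightarrow> bool" where
  "composition_rep \<rho> P \<psi> \<longleftrightarrow>
     (\<forall>R>0. continuous_on (sublevel \<rho> R) \<psi>) \<and>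
     bdd_above (range (\<lambda>x. \<rho> (\<psi> x) / \<rho> x)) \<and>
     (\<forall>f\<in>Brho \<rho>. P f = f \<circ> \<psi>)"

end

theory Submission
  imports Defs
begin

text \<open>Composition with \<open>\<psi>\<close> is a smooth operator algebra homomorphism because
  \<open>\<B>\<^sup>\<rho>\<close> is stable under composition with bounded continuous functions of finitely many
  arguments, and \<open>\<rho> \<circ> \<psi> \<le> C \<rho>\<close> makes \<open>f \<mapsto> f \<circ> \<psi>\<close> continuous.

  Conversely, linearity and continuity of \<open>P\<close> give \<open>\<bar>P g x\<bar> \<le> L \<parallel>g\<parallel>\<^sub>\<rho> \<rho>(x)\<close>. If \<open>g \<mapsto> P g x\<close> were
  not evaluation at a point of the compact set \<open>K = {\<rho> \<le> 2 L \<rho>(x)}\<close>, functions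
  \<open>sin\<^sup>2(k (f - P f x))\<close> and compactness give \<open>F \<ge> 0\<close> with \<open>P F x = 0\<close> and \<open>F \<ge> \<delta> > 0\<close> on \<open>K\<close>.
  Since \<open>P\<close> commutes with smooth functions, \<open>h = cos(c F)\<^sup>n\<close> has \<open>P h x = 1\<close>, although \<open>h\<close> is
  bounded by \<open>1\<close> and uniformly small on \<open>K\<close>, hence of weighted norm too small for that. The
  resulting \<open>\<psi>\<close> is continuous on sublevel sets and unique because completely regular Hausdorff
  spaces have enough Urysohn functions.\<close>

text \<open>Trigonometric polynomials with real frequencies: smooth with bounded derivatives of all
  orders, they serve as the one-variable test functions fed to the homomorphism property.\<close>
inductive_set trig_poly :: "(real \<Rightarrow> real) set" where
  const: "(\<lambda>t. c) \<in> trig_poly"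
| sin: "(\<lambda>t. sin (a * t + b)) \<in> trig_poly"
| add: "f \<in> trig_poly \<Longrightarrow> g \<in> trig_poly \<Longrightarrow> (\<lambda>t. f t + g t) \<in> trig_poly"
| mult: "f \<in> trig_poly \<Longrightarrow> g \<in> trig_poly \<Longrightarrow> (\<lambda>t. f t * g t) \<in> trig_poly"

lemma trig_poly_cos: "(\<lambda>t. cos (a * t + b)) \<in> trig_poly"
  using trig_poly.sin[of a "b + pi / 2"] by (simp add: sin_add add.assoc[symmetric])

lemma trig_poly_power: "f \<in> trig_poly \<Longrightarrow> (\<lambda>t. f t ^ n) \<in> trig_poly"
  by (induction n) (auto intro: trig_poly.intros)

lemma trig_poly_has_derivative:
  "f \<in> trig_poly \<Longrightarrow> \<exists>f'\<in>trig_poly. \<forall>t. (f has_real_derivative f' t) (at t)"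
proof (induction rule: trig_poly.induct)
  case (const c)
  show ?case by (rule bexI[of _ "\<lambda>t. 0"]) (auto intro: trig_poly.const)
next
  case (sin a b)
  have "((\<lambda>t. sin (a * t + b)) has_real_derivative a * cos (a * t + b)) (at t)" for t
    by (auto intro!: derivative_eq_intros)
  moreover have "(\<lambda>t. a * cos (a * t + b)) \<in> trig_poly"
    by (intro trig_poly.mult trig_poly.const trig_poly_cos)
  ultimately show ?case by (intro bexI[of _ "\<lambda>t. a * cos (a * t + b)"] allI)
next
  case (add f g)
  then obtain f' g' where "f' \<in> trig_poly" "g' \<in> trig_poly"
    "\<forall>t. (f has_real_derivative f' t) (at t)" "\<forall>t. (g has_real_derivative g' t) (at t)"
    by blast
  then show ?case
    by (intro bexI[of _ "\<lambda>t. f' t + g' t"] allI DERIV_add trig_poly.add) auto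
next
  case (mult f g)
  then obtain f' g' where d: "f' \<in> trig_poly" "g' \<in> trig_poly"
    "\<forall>t. (f has_real_derivative f' t) (at t)" "\<forall>t. (g has_real_derivative g' t) (at t)"
    by blast
  have "(\<lambda>t. f' t * g t + f t * g' t) \<in> trig_poly"
    using d(1,2) mult.hyps by (intro trig_poly.add trig_poly.mult)
  moreover have "\<forall>t. ((\<lambda>t. f t * g t) has_real_derivative f' t * g t + f t * g' t) (at t)"
    using d(3,4) by (auto intro!: derivative_eq_intros)
  ultimately show ?case by (intro bexI[of _ "\<lambda>t. f' t * g t + f t * g' t"])
qed

lemma trig_poly_bounded: "f \<in> trig_poly \<Longrightarrow> \<exists>M. \<forall>t. \<bar>f t\<bar> \<le> M"
proof (induction rule: trig_poly.induct)
  case (const c)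
  show ?case by auto
next
  case (sin a b)
  show ?case using abs_sin_le_one by blast
next
  case (add f g)
  then obtain M1 M2 where "\<forall>t. \<bar>f t\<bar> \<le> M1" "\<forall>t. \<bar>g t\<bar> \<le> M2" by blast
  then have "\<forall>t. \<bar>f t + g t\<bar> \<le> M1 + M2" by (metis abs_triangle_ineq add_mono order_trans)
  then show ?case by blast
next
  case (mult f g)
  then obtain M1 M2 where "\<forall>t. \<bar>f t\<bar> \<le> M1" "\<forall>t. \<bar>g t\<bar> \<le> M2" by blast
  then have "\<forall>t. \<bar>f t * g t\<bar> \<le> M1 * M2"
    by (simp add: abs_mult mult_mono')
  then show ?case by blast
qed

lemma trig_poly_continuous: "f \<in> trig_poly \<Longrightarrow> continuous_on UNIV f"
  using trig_poly_has_derivative by (meson DERIV_isCont continuous_at_imp_continuous_on)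

lemma iter_partial_trig_poly:
  assumes "set is \<subseteq> {..<1}" and "g \<in> trig_poly"
  shows "\<exists>h\<in>trig_poly. iter_partial is (\<lambda>x. g (x 0)) = (\<lambda>x. h (x 0))"
  using assms
proof (induction "is")
  case Nil
  then show ?case by auto
next
  case (Cons i "is")
  then obtain h where h: "h \<in> trig_poly" "iter_partial is (\<lambda>x. g (x 0)) = (\<lambda>x. h (x 0))"
    by auto
  obtain h' where h': "h' \<in> trig_poly" "\<forall>t. (h has_real_derivative h' t) (at t)"
    using trig_poly_has_derivative[OF h(1)] by blast
  have "deriv (\<lambda>t. h (x 0 + t)) 0 = h' (x 0)" for x :: "nat \<Rightarrow> real"
    using DERIV_shift[of h "h' (x 0)" 0 "x 0"] h'(2) by (simp add: DERIV_imp_deriv add.commute)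
  moreover have "i = 0" using Cons.prems by auto
  ultimately have "iter_partial (i # is) (\<lambda>x. g (x 0)) = (\<lambda>x. h' (x 0))"
    using h(2) by simp
  then show ?case using h'(1) by blast
qed

lemma smooth_Rn_trig_poly:
  assumes "g \<in> trig_poly"
  shows "smooth_Rn 1 (\<lambda>x. g (x 0))"
  unfolding smooth_Rn_def
proof (intro allI impI conjI ballI)
  fix "is" :: "nat list" assume "set is \<subseteq> {..<1}"
  then obtain h where h: "h \<in> trig_poly" "iter_partial is (\<lambda>x. g (x 0)) = (\<lambda>x. h (x 0))"
    using iter_partial_trig_poly assms by blast
  have "continuous_on UNIV (\<lambda>x::nat \<Rightarrow> real. h (x 0))"
    using continuous_on_compose[OF continuous_on_product_coordinates[of 0]
        continuous_on_subset[OF trig_poly_continuous[OF h(1)]]]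
    by (simp add: o_def)
  then show "continuous_on (Rn 1) (iter_partial is (\<lambda>x. g (x 0)))"
    using h(2) continuous_on_subset by fastforce
  fix i x assume "i < (1::nat)" "x \<in> Rn 1"
  obtain h' where "\<forall>t. (h has_real_derivative h' t) (at t)"
    using trig_poly_has_derivative[OF h(1)] by blast
  then have "((\<lambda>t. h (t + x 0)) has_real_derivative h' (x 0)) (at 0)"
    using DERIV_shift[of h "h' (x 0)" 0 "x 0"] by simp
  then show "(\<lambda>t. iter_partial is (\<lambda>x. g (x 0)) (x(i := x i + t))) differentiable (at 0)"
    using h(2) \<open>i < 1\<close> by (auto simp: add.commute real_differentiable_def)
qed

lemma bounded_trig_poly_Rn: "g \<in> trig_poly \<Longrightarrow> bounded ((\<lambda>v. g (v 0)) ` Rn 1)"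
  using trig_poly_bounded[of g] by (auto simp: bounded_iff)

lemma vec_of_in_Rn: "vec_of n w \<in> Rn n"
  by (simp add: vec_of_def Rn_def)

lemma smooth_Rn_continuous_on: "smooth_Rn n \<phi> \<Longrightarrow> continuous_on (Rn n) \<phi>"
  unfolding smooth_Rn_def by (metis empty_subsetI iter_partial.simps(1) list.set(1))

text \<open>The product metric on \<open>nat \<Rightarrow> real\<close> weights coordinate \<open>k\<close> by \<open>2\<^sup>-\<^sup>k\<close>, of total
  weight \<open>2\<close>.\<close>
lemma dist_Rn_le:
  fixes u v :: "nat \<Rightarrow> real"
  assumes "u \<in> Rn n" "v \<in> Rn n" "t \<ge> 0" "\<And>i. i < n \<Longrightarrow> \<bar>u i - v i\<bar> \<le> t"
  shows "dist u v \<le> 2 * t"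
proof -
  have coord: "dist (u j) (v j) \<le> t" for j
    using assms by (cases "j < n") (auto simp: Rn_def dist_real_def)
  have approx: "dist u v \<le> 2 * t + (1/2) ^ N" for N
  proof -
    have "Max {dist (u (from_nat k)) (v (from_nat k)) |k. k \<le> N} \<le> t"
      using coord by (subst Max_le_iff) auto
    then show ?thesis using dist_fun_le_dist_first_terms[of u v N] by linarith
  qed
  show ?thesis
  proof (rule ccontr)
    assume "\<not> ?thesis"
    then obtain N where "(1/2::real) ^ N < dist u v - 2 * t"
      using real_arch_pow_inv[of "dist u v - 2 * t" "1/2"] by auto
    then show False using approx[of N] by linarith
  qed
qed

lemma compact_Rn_box: "compact {v \<in> Rn n. \<forall>i<n. \<bar>v i\<bar> \<le> c}"
proof -
  have "{v \<in> Rn n. \<forall>i<n. \<bar>v i\<bar> \<le> c} = Pi\<^sub>E UNIV (\<lambda>i. if i < n then {-c..c} else {0})"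
  proof (intro set_eqI iffI)
    fix v assume "v \<in> Pi\<^sub>E UNIV (\<lambda>i. if i < n then {-c..c} else {0})"
    then have "\<And>i. v i \<in> (if i < n then {-c..c} else {0})"
      by (simp add: PiE_UNIV_domain Pi_iff)
    then have "\<forall>i<n. \<bar>v i\<bar> \<le> c" "\<forall>i\<ge>n. v i = 0"
      by (metis abs_le_iff atLeastAtMost_iff minus_le_iff, metis leD singletonD)
    then show "v \<in> {v \<in> Rn n. \<forall>i<n. \<bar>v i\<bar> \<le> c}"
      by (simp add: Rn_def)
  next
    fix v assume "v \<in> {v \<in> Rn n. \<forall>i<n. \<bar>v i\<bar> \<le> c}"
    then show "v \<in> Pi\<^sub>E UNIV (\<lambda>i. if i < n then {-c..c} else {0})"
      by (simp add: Rn_def PiE_UNIV_domain Pi_iff abs_le_iff minus_le_iff)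
  qed
  moreover have "compactin (product_topology (\<lambda>i. euclidean) UNIV)
      (Pi\<^sub>E UNIV (\<lambda>i. if i < n then {-c..c} else {0::real}))"
    unfolding compactin_PiE by simp
  ultimately show ?thesis
    by (simp add: euclidean_product_topology)
qed

lemma Rn_uniformly_continuous_on_bounded:
  fixes \<phi> :: "(nat \<Rightarrow> real) \<Rightarrow> real"
  assumes "continuous_on (Rn n) \<phi>" "e > 0"
  obtains \<tau> where "\<tau> > 0"
    "\<And>u v. u \<in> Rn n \<Longrightarrow> v \<in> Rn n \<Longrightarrow> (\<And>i. i < n \<Longrightarrow> \<bar>u i\<bar> \<le> M \<and> \<bar>u i - v i\<bar> \<le> \<tau>)
      \<Longrightarrow> \<bar>\<phi> u - \<phi> v\<bar> < e"
proof -
  define S where "S = {v \<in> Rn n. \<forall>i<n. \<bar>v i\<bar> \<le> M + 1}"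
  have "uniformly_continuous_on S \<phi>"
    using compact_uniformly_continuous[OF continuous_on_subset[OF assms(1)]] compact_Rn_box
    by (auto simp: S_def)
  then obtain \<eta> where \<eta>: "\<eta> > 0" "\<And>u v. u \<in> S \<Longrightarrow> v \<in> S \<Longrightarrow> dist v u < \<eta> \<Longrightarrow> dist (\<phi> v) (\<phi> u) < e"
    using assms(2) unfolding uniformly_continuous_on_def by metis
  define \<tau> where "\<tau> = min (\<eta> / 4) 1"
  show ?thesis
  proof (rule that)
    show "\<tau> > 0" using \<eta>(1) by (simp add: \<tau>_def)
    fix u v assume u: "u \<in> Rn n" and v: "v \<in> Rn n"
      and close: "\<And>i. i < n \<Longrightarrow> \<bar>u i\<bar> \<le> M \<and> \<bar>u i - v i\<bar> \<le> \<tau>"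
    have "\<bar>u i\<bar> \<le> M + 1 \<and> \<bar>v i\<bar> \<le> M + 1" if "i < n" for i
      using close[OF that] by (simp add: \<tau>_def) linarith
    then have "u \<in> S" "v \<in> S"
      using u v by (auto simp: S_def)
    moreover have "dist v u \<le> 2 * \<tau>"
      using close \<eta>(1) by (intro dist_Rn_le[OF v u]) (auto simp: \<tau>_def abs_minus_commute)
    then have "dist v u < \<eta>"
      using \<eta>(1) by (simp add: \<tau>_def)
    ultimately show "\<bar>\<phi> u - \<phi> v\<bar> < e"
      using \<eta>(2) by (simp add: dist_real_def abs_minus_commute)
  qed
qed

locale weighted_space =
  fixes \<rho> :: "'a::topological_space \<Rightarrow> real"
  assumes Hausdorff: "Hausdorff_space (euclidean :: 'a topology)"
    and admissible: "admissible_weight \<rho>"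
begin

lemma weight_pos: "\<rho> x > 0"
  using admissible by (simp add: admissible_weight_def)

lemma compact_sublevel: "compact {x. \<rho> x \<le> R}"
proof (cases "R \<ge> 0")
  case False
  then have "R < \<rho> x" for x using weight_pos[of x] by linarith
  then have "{x. \<rho> x \<le> R} = {}" by (auto simp: not_le)
  then show ?thesis by (simp only: compact_empty)
qed (use admissible in \<open>unfold admissible_weight_def, blast\<close>)

lemma closed_sublevel: "closed {x. \<rho> x \<le> R}"
  using compactin_imp_closedin[OF Hausdorff] compact_sublevel
  by (metis closed_closedin compactin_euclidean_iff)

text \<open>The weight need not be continuous: the open complements of the sublevel sets
  \<open>{\<rho> \<le> 1/(k+1)}\<close> cover the compact set \<open>{\<rho> \<le> 1}\<close>, so finitely many of them do.\<close>
lemma weight_bounded_below: "\<exists>m>0. \<forall>x. m \<le> \<rho> x"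
proof -
  define U where "U k = - {x. \<rho> x \<le> 1 / Suc k}" for k :: nat
  have "{x. \<rho> x \<le> 1} \<subseteq> (\<Union>k. U k)"
  proof
    fix x
    obtain k where "inverse (real (Suc k)) < \<rho> x"
      using reals_Archimedean weight_pos by blast
    then show "x \<in> (\<Union>k. U k)" unfolding U_def by (intro UN_I[of k]) (auto simp: inverse_eq_divide)
  qed
  moreover have "open (U k)" for k
    using closed_sublevel by (simp add: U_def open_Compl)
  ultimately obtain C where C: "finite C" "{x. \<rho> x \<le> 1} \<subseteq> (\<Union>k\<in>C. U k)"
    by (metis compactE_image[OF compact_sublevel])
  define N where "N = Max (insert 0 C)"
  have "1 / Suc N \<le> \<rho> x" for x
  proof (cases "\<rho> x \<le> 1")
    case True
    then obtain k where "k \<in> C" "1 / Suc k < \<rho> x" using C(2) unfolding U_def by force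
    moreover have "1 / real (Suc N) \<le> 1 / Suc k"
      using \<open>k \<in> C\<close> C(1) by (simp add: N_def frac_le)
    ultimately show ?thesis by linarith
  next
    case False
    moreover have "1 / real (Suc N) \<le> 1" by simp
    ultimately show ?thesis by linarith
  qed
  then show ?thesis by (intro exI[of _ "1 / Suc N"]) auto
qed

definition weight_inf :: real where
  "weight_inf = Inf (range \<rho>)"

lemma weight_inf_pos: "weight_inf > 0"
  and weight_inf_le: "weight_inf \<le> \<rho> x"
proof -
  obtain m where m: "m > 0" "\<And>x. m \<le> \<rho> x" using weight_bounded_below by blast
  then have "bdd_below (range \<rho>)" by (intro bdd_belowI2)
  then show "weight_inf \<le> \<rho> x" unfolding weight_inf_def by (rule cINF_lower) simp
  have "m \<le> weight_inf" unfolding weight_inf_def using m(2) by (intro cINF_greatest) auto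
  then show "weight_inf > 0" using m(1) by linarith
qed

lemma abs_le_wnorm_mult: "wfinite \<rho> f \<Longrightarrow> \<bar>f z\<bar> \<le> wnorm \<rho> f * \<rho> z"
  using cSUP_upper[of z UNIV "\<lambda>x. \<bar>f x\<bar> / \<rho> x"] weight_pos[of z]
  by (simp add: wfinite_def wnorm_def divide_le_eq)

lemma wfiniteI: "(\<And>z. \<bar>f z\<bar> \<le> c * \<rho> z) \<Longrightarrow> wfinite \<rho> f"
  using weight_pos unfolding wfinite_def by (auto intro!: bdd_aboveI simp: divide_le_eq)

lemma wnorm_le: "(\<And>z. \<bar>f z\<bar> \<le> c * \<rho> z) \<Longrightarrow> wnorm \<rho> f \<le> c"
  using weight_pos unfolding wnorm_def by (auto intro!: cSUP_least simp: divide_le_eq)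

lemma wnorm_nonneg: "wfinite \<rho> f \<Longrightarrow> wnorm \<rho> f \<ge> 0"
  using abs_le_wnorm_mult[of f undefined] weight_pos[of undefined]
  by (metis abs_ge_zero not_le order.trans mult_neg_pos)

lemma wfinite_if_bounded:
  assumes "bounded (range f)"
  shows "wfinite \<rho> f"
proof -
  obtain B where B: "\<And>z. \<bar>f z\<bar> \<le> B" using assms by (auto simp: bounded_iff)
  have "\<bar>f z\<bar> \<le> B / weight_inf * \<rho> z" for z
  proof -
    have "B = B / weight_inf * weight_inf" using weight_inf_pos by simp
    also have "\<dots> \<le> B / weight_inf * \<rho> z"
      using B[of z] weight_inf_pos weight_inf_le by (intro mult_left_mono) auto
    finally show ?thesis using B[of z] by linarith
  qed
  then show ?thesis by (rule wfiniteI)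
qed

lemma Brho_imp_wfinite: "f \<in> Brho \<rho> \<Longrightarrow> wfinite \<rho> f"
  unfolding Brho_def by blast

lemma Brho_approxE:
  assumes "f \<in> Brho \<rho>" "e > 0"
  obtains g where "continuous_on UNIV g" "bounded (range g)" "\<And>z. \<bar>f z - g z\<bar> \<le> e * \<rho> z"
proof -
  obtain g where g: "continuous_on UNIV g" "bounded (range g)"
      "wfinite \<rho> (\<lambda>x. f x - g x)" "wnorm \<rho> (\<lambda>x. f x - g x) < e"
    using assms unfolding Brho_def by blast
  have "\<bar>f z - g z\<bar> \<le> e * \<rho> z" for z
    using abs_le_wnorm_mult[OF g(3), of z] g(4) weight_pos[of z]
    by (meson less_imp_le mult_right_mono order.trans)
  then show ?thesis using that g(1,2) by blast
qed

lemma BrhoI: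
  assumes "wfinite \<rho> f"
    and "\<And>e. e > 0 \<Longrightarrow>
      \<exists>g. continuous_on UNIV g \<and> bounded (range g) \<and> (\<forall>z. \<bar>f z - g z\<bar> \<le> e * \<rho> z)"
  shows "f \<in> Brho \<rho>"
  unfolding Brho_def
proof (intro CollectI conjI allI impI assms(1))
  fix e :: real assume "e > 0"
  then obtain g where g: "continuous_on UNIV g" "bounded (range g)" "\<forall>z. \<bar>f z - g z\<bar> \<le> e/2 * \<rho> z"
    using assms(2)[of "e/2"] by auto
  then have "wfinite \<rho> (\<lambda>x. f x - g x)" "wnorm \<rho> (\<lambda>x. f x - g x) \<le> e/2"
    using wfiniteI[of "\<lambda>x. f x - g x"] wnorm_le[of "\<lambda>x. f x - g x"] by blast+
  moreover have "e/2 < e" using \<open>e > 0\<close> by simp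
  ultimately
  show "\<exists>g. continuous_on UNIV g \<and> bounded (range g) \<and>
      wfinite \<rho> (\<lambda>x. f x - g x) \<and> wnorm \<rho> (\<lambda>x. f x - g x) < e"
    using g(1,2) by (blast intro: le_less_trans)
qed

lemma Brho_if_bounded_continuous:
  "continuous_on UNIV f \<Longrightarrow> bounded (range f) \<Longrightarrow> f \<in> Brho \<rho>"
  using weight_pos by (intro BrhoI wfinite_if_bounded) (auto intro!: exI[of _ f] less_imp_le)

lemma Brho_const: "(\<lambda>x. c) \<in> Brho \<rho>"
  by (rule Brho_if_bounded_continuous) auto

lemma Brho_lincomb:
  assumes f: "f \<in> Brho \<rho>" and g: "g \<in> Brho \<rho>"
  shows "(\<lambda>x. a * f x + b * g x) \<in> Brho \<rho>"
proof (rule BrhoI)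
  have "\<bar>a * f z + b * g z\<bar> \<le> (\<bar>a\<bar> * wnorm \<rho> f + \<bar>b\<bar> * wnorm \<rho> g) * \<rho> z" for z
  proof -
    have "\<bar>a * f z + b * g z\<bar> \<le> \<bar>a\<bar> * \<bar>f z\<bar> + \<bar>b\<bar> * \<bar>g z\<bar>"
      by (metis abs_mult abs_triangle_ineq)
    also have "\<dots> \<le> \<bar>a\<bar> * (wnorm \<rho> f * \<rho> z) + \<bar>b\<bar> * (wnorm \<rho> g * \<rho> z)"
      using f g by (intro add_mono mult_left_mono abs_le_wnorm_mult Brho_imp_wfinite) auto
    finally show ?thesis by (simp add: algebra_simps)
  qed
  then show "wfinite \<rho> (\<lambda>x. a * f x + b * g x)" by (rule wfiniteI)
next
  fix e :: real assume "e > 0"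
  define d where "d = e / (\<bar>a\<bar> + \<bar>b\<bar> + 1)"
  have d: "d > 0" "(\<bar>a\<bar> + \<bar>b\<bar>) * d \<le> e"
    using \<open>e > 0\<close> by (auto simp: d_def field_simps)
  obtain f1 where f1: "continuous_on UNIV f1" "bounded (range f1)" "\<And>z. \<bar>f z - f1 z\<bar> \<le> d * \<rho> z"
    using Brho_approxE[OF f d(1)] by blast
  obtain g1 where g1: "continuous_on UNIV g1" "bounded (range g1)" "\<And>z. \<bar>g z - g1 z\<bar> \<le> d * \<rho> z"
    using Brho_approxE[OF g d(1)] by blast
  have "continuous_on UNIV (\<lambda>x. a * f1 x + b * g1 x)"
    using f1(1) g1(1) by (intro continuous_intros)
  moreover have "bounded (range (\<lambda>x. a * f1 x + b * g1 x))"
    using bounded_scaling[OF f1(2), of a] bounded_scaling[OF g1(2), of b]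
    by (intro bounded_plus_comp) (simp_all add: image_image)
  moreover have "\<bar>a * f z + b * g z - (a * f1 z + b * g1 z)\<bar> \<le> e * \<rho> z" for z
  proof -
    have "\<bar>a * f z + b * g z - (a * f1 z + b * g1 z)\<bar> \<le> \<bar>a\<bar> * \<bar>f z - f1 z\<bar> + \<bar>b\<bar> * \<bar>g z - g1 z\<bar>"
      by (metis abs_mult abs_triangle_ineq right_diff_distrib add_diff_add)
    also have "\<dots> \<le> (\<bar>a\<bar> + \<bar>b\<bar>) * d * \<rho> z"
      using add_mono[OF mult_left_mono[OF f1(3), of "\<bar>a\<bar>"] mult_left_mono[OF g1(3), of "\<bar>b\<bar>"]]
      by (simp add: algebra_simps)
    also have "\<dots> \<le> e * \<rho> z"
      using d(2) weight_pos[of z] by (intro mult_right_mono) auto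
    finally show ?thesis .
  qed
  ultimately show "\<exists>h. continuous_on UNIV h \<and> bounded (range h) \<and>
      (\<forall>z. \<bar>a * f z + b * g z - h z\<bar> \<le> e * \<rho> z)"
    by blast
qed

lemma Brho_diff: "f \<in> Brho \<rho> \<Longrightarrow> g \<in> Brho \<rho> \<Longrightarrow> (\<lambda>x. f x - g x) \<in> Brho \<rho>"
  using Brho_lincomb[of f g 1 "-1"] by simp

lemma Brho_sum:
  "finite Y \<Longrightarrow> (\<And>y. y \<in> Y \<Longrightarrow> F y \<in> Brho \<rho>) \<Longrightarrow> (\<lambda>x. \<Sum>y\<in>Y. F y x) \<in> Brho \<rho>"
proof (induction Y rule: finite_induct)
  case empty
  then show ?case using Brho_const[of 0] by simp
next
  case (insert y Y)
  then have "(\<lambda>x. 1 * F y x + 1 * (\<Sum>y\<in>Y. F y x)) \<in> Brho \<rho>"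
    by (intro Brho_lincomb) auto
  then show ?case using insert by simp
qed

lemma Brho_uniform_approx_on_sublevel:
  assumes "f \<in> Brho \<rho>" "e > 0"
  obtains g where "continuous_on UNIV g" "bounded (range g)" "\<And>z. \<rho> z \<le> R \<Longrightarrow> \<bar>f z - g z\<bar> \<le> e"
proof -
  define d where "d = e / (\<bar>R\<bar> + 1)"
  have d: "d > 0" "d * (\<bar>R\<bar> + 1) = e" using assms(2) by (auto simp: d_def)
  obtain g where g: "continuous_on UNIV g" "bounded (range g)" "\<And>z. \<bar>f z - g z\<bar> \<le> d * \<rho> z"
    using Brho_approxE[OF assms(1) d(1)] by blast
  have "\<bar>f z - g z\<bar> \<le> e" if "\<rho> z \<le> R" for z
  proof -
    have "d * \<rho> z \<le> d * (\<bar>R\<bar> + 1)" using that d(1) by (intro mult_left_mono) auto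
    then show ?thesis using g(3)[of z] d(2) by linarith
  qed
  then show ?thesis using that g(1,2) by blast
qed

lemma Brho_continuous_on_sublevel:
  assumes "f \<in> Brho \<rho>"
  shows "continuous_on {x. \<rho> x \<le> R} f"
proof -
  let ?K = "{x. \<rho> x \<le> R}"
  have "\<forall>d>0. \<exists>g. continuous_on UNIV g \<and> (\<forall>z\<in>?K. \<bar>f z - g z\<bar> \<le> d)"
    using Brho_uniform_approx_on_sublevel[OF assms] by (metis mem_Collect_eq)
  then obtain G where G: "\<And>d. d > 0 \<Longrightarrow> continuous_on UNIV (G d)"
    "\<And>d z. d > 0 \<Longrightarrow> z \<in> ?K \<Longrightarrow> \<bar>f z - G d z\<bar> \<le> d"
    by metis
  show ?thesis
  proof (rule uniform_limit_theorem)
    show "\<forall>\<^sub>F d in at_right 0. continuous_on ?K (G d)"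
      using G(1) continuous_on_subset unfolding eventually_at_right_field by (metis subset_UNIV zero_less_one)
    show "uniform_limit ?K G f (at_right 0)"
    proof (rule uniform_limitI)
      fix e :: real assume "e > 0"
      have "\<forall>x\<in>?K. dist (G d x) (f x) < e" if "0 < d" "d < e" for d
        using G(2)[OF that(1)] that(2) by (fastforce simp: dist_real_def abs_minus_commute)
      then show "\<forall>\<^sub>F d in at_right 0. \<forall>x\<in>?K. dist (G d x) (f x) < e"
        using \<open>e > 0\<close> by (auto simp: eventually_at_right_field)
    qed
  qed (simp add: trivial_limit_at_right_real)
qed

lemma Brho_bounded_on_sublevel:
  fixes fs :: "nat \<Rightarrow> 'a \<Rightarrow> real"
  assumes "\<forall>i<n. fs i \<in> Brho \<rho>"
  obtains M where "\<And>i z. i < n \<Longrightarrow> \<rho> z \<le> R \<Longrightarrow> \<bar>fs i z\<bar> \<le> M"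
proof -
  let ?S = "\<lambda>z. \<Sum>i<n. \<bar>fs i z\<bar>"
  have "continuous_on {x. \<rho> x \<le> R} ?S"
    using assms Brho_continuous_on_sublevel by (intro continuous_intros) auto
  then have "bounded (?S ` {x. \<rho> x \<le> R})"
    by (intro compact_imp_bounded compact_continuous_image compact_sublevel)
  then obtain M where M: "\<And>z. \<rho> z \<le> R \<Longrightarrow> \<bar>?S z\<bar> \<le> M" by (auto simp: bounded_iff)
  have "\<bar>fs i z\<bar> \<le> M" if "i < n" "\<rho> z \<le> R" for i z
    using member_le_sum[of i "{..<n}" "\<lambda>i. \<bar>fs i z\<bar>"] M[OF that(2)] that(1) by simp
  then show ?thesis using that by blast
qed

lemma Brho_positive_on_sublevel_bounded_below:
  assumes "F \<in> Brho \<rho>" "\<And>z. \<rho> z \<le> R \<Longrightarrow> F z > 0"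
  obtains \<delta> where "\<delta> > 0" "\<And>z. \<rho> z \<le> R \<Longrightarrow> \<delta> \<le> F z"
proof (cases "{z. \<rho> z \<le> R} = {}")
  case True
  then show ?thesis using that[of 1] by auto
next
  case False
  obtain z0 where "\<rho> z0 \<le> R" "\<And>z. \<rho> z \<le> R \<Longrightarrow> F z0 \<le> F z"
    using continuous_attains_inf[OF compact_sublevel False Brho_continuous_on_sublevel[OF assms(1)]]
    by auto
  then show ?thesis using that[of "F z0"] assms(2) by blast
qed

lemma Brho_finite_sum_positive_on_sublevel:
  assumes "\<And>y. \<rho> y \<le> R \<Longrightarrow> g y \<in> Brho \<rho>" "\<And>y z. \<rho> y \<le> R \<Longrightarrow> 0 \<le> g y z"
    and "\<And>y. \<rho> y \<le> R \<Longrightarrow> g y y > 0"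
  obtains Y where "finite Y" "Y \<subseteq> {y. \<rho> y \<le> R}" "\<And>z. \<rho> z \<le> R \<Longrightarrow> (\<Sum>y\<in>Y. g y z) > 0"
proof -
  let ?K = "{z. \<rho> z \<le> R}"
  have "\<exists>V. open V \<and> V \<inter> ?K = g y -` {0<..} \<inter> ?K" if y: "y \<in> ?K" for y
  proof -
    have "continuous_on ?K (g y)" using y assms(1) Brho_continuous_on_sublevel by simp
    then show ?thesis using open_greaterThan unfolding continuous_on_open_invariant by blast
  qed
  then obtain V where V: "\<And>y. y \<in> ?K \<Longrightarrow> open (V y) \<and> V y \<inter> ?K = g y -` {0<..} \<inter> ?K"
    by metis
  have "?K \<subseteq> (\<Union>y\<in>?K. V y)" using V assms(3) by blast
  then obtain Y where Y: "Y \<subseteq> ?K" "finite Y" "?K \<subseteq> (\<Union>y\<in>Y. V y)"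
    using compactE_image[OF compact_sublevel, of ?K V] V by metis
  have "(\<Sum>y\<in>Y. g y z) > 0" if z: "\<rho> z \<le> R" for z
  proof -
    obtain y where y: "y \<in> Y" "z \<in> V y" using Y(3) z by blast
    then have "0 < g y z" using V[of y] Y(1) z by blast
    also have "g y z \<le> (\<Sum>y\<in>Y. g y z)" using y(1) Y assms(2) by (intro member_le_sum) auto
    finally show ?thesis .
  qed
  then show ?thesis using that Y(1,2) by blast
qed

lemma Brho_uniform_approx_family_on_sublevel:
  assumes "\<forall>i<n. fs i \<in> Brho \<rho>" "\<tau> > 0"
  obtains g where "continuous_on UNIV (\<lambda>z. vec_of n (\<lambda>i. g i z))"
    "\<And>i z. i < n \<Longrightarrow> \<rho> z \<le> R \<Longrightarrow> \<bar>fs i z - g i z\<bar> \<le> \<tau>"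
proof -
  have "\<forall>i<n. \<exists>g. continuous_on UNIV g \<and> (\<forall>z. \<rho> z \<le> R \<longrightarrow> \<bar>fs i z - g z\<bar> \<le> \<tau>)"
  proof (intro allI impI)
    fix i assume "i < n"
    then obtain g where "continuous_on UNIV g" "\<And>z. \<rho> z \<le> R \<Longrightarrow> \<bar>fs i z - g z\<bar> \<le> \<tau>"
      using Brho_uniform_approx_on_sublevel[OF _ assms(2)] assms(1) by blast
    then show "\<exists>g. continuous_on UNIV g \<and> (\<forall>z. \<rho> z \<le> R \<longrightarrow> \<bar>fs i z - g z\<bar> \<le> \<tau>)" by blast
  qed
  then obtain g where g: "\<And>i. i < n \<Longrightarrow> continuous_on UNIV (g i)"
    "\<And>i z. i < n \<Longrightarrow> \<rho> z \<le> R \<Longrightarrow> \<bar>fs i z - g i z\<bar> \<le> \<tau>"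
    by metis
  have "continuous_on UNIV (\<lambda>z. if i < n then g i z else 0)" for i
    by (cases "i < n") (simp_all add: g(1))
  then have "continuous_on UNIV (\<lambda>z. vec_of n (\<lambda>i. g i z))"
    unfolding vec_of_def by (intro continuous_on_coordinatewise_then_product)
  then show ?thesis using that g(2) by blast
qed

text \<open>On the compact set \<open>K\<^sub>R\<close> the \<open>f\<^sub>i\<close> are bounded, so uniform continuity of \<open>\<phi>\<close> there
  transfers uniform approximation of the \<open>f\<^sub>i\<close> to \<open>\<phi> \<circ> f\<close>; outside \<open>K\<^sub>R\<close> the bound
  \<open>2 B \<le> e R\<close> on the difference suffices.\<close>
lemma Brho_compose:
  fixes \<phi> :: "(nat \<Rightarrow> real) \<Rightarrow> real"
  assumes \<phi>: "continuous_on (Rn n) \<phi>" "bounded (\<phi> ` Rn n)"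
    and fs: "\<forall>i<n. fs i \<in> Brho \<rho>"
  shows "(\<lambda>x. \<phi> (vec_of n (\<lambda>i. fs i x))) \<in> Brho \<rho>"
proof (rule BrhoI)
  obtain B where B: "\<And>v. v \<in> Rn n \<Longrightarrow> \<bar>\<phi> v\<bar> \<le> B" using \<phi>(2) by (auto simp: bounded_iff)
  have bounded_comp: "bounded (range (\<lambda>x. \<phi> (vec_of n (G x))))" for G
    by (intro bounded_subset[OF \<phi>(2)] image_subsetI imageI vec_of_in_Rn)
  show "wfinite \<rho> (\<lambda>x. \<phi> (vec_of n (\<lambda>i. fs i x)))"
    using bounded_comp[of "\<lambda>x i. fs i x"] by (rule wfinite_if_bounded)
  fix e :: real assume "e > 0"
  define R where "R = 2 * B / e"
  obtain M where M: "\<And>i z. i < n \<Longrightarrow> \<rho> z \<le> R \<Longrightarrow> \<bar>fs i z\<bar> \<le> M"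
    using Brho_bounded_on_sublevel[OF fs] by blast
  obtain \<tau> where \<tau>: "\<tau> > 0" "\<And>u v. u \<in> Rn n \<Longrightarrow> v \<in> Rn n \<Longrightarrow>
      (\<And>i. i < n \<Longrightarrow> \<bar>u i\<bar> \<le> M \<and> \<bar>u i - v i\<bar> \<le> \<tau>) \<Longrightarrow> \<bar>\<phi> u - \<phi> v\<bar> < e * weight_inf"
    using Rn_uniformly_continuous_on_bounded[OF \<phi>(1)] \<open>e > 0\<close> weight_inf_pos by (metis mult_pos_pos)
  obtain g where g: "continuous_on UNIV (\<lambda>z. vec_of n (\<lambda>i. g i z))"
      "\<And>i z. i < n \<Longrightarrow> \<rho> z \<le> R \<Longrightarrow> \<bar>fs i z - g i z\<bar> \<le> \<tau>"
    using Brho_uniform_approx_family_on_sublevel[OF fs \<tau>(1)] by blast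
  from g(1) have "continuous_on UNIV (\<lambda>z. \<phi> (vec_of n (\<lambda>i. g i z)))"
    by (rule continuous_on_compose2[OF \<phi>(1)]) (auto intro: vec_of_in_Rn)
  moreover have "\<bar>\<phi> (vec_of n (\<lambda>i. fs i z)) - \<phi> (vec_of n (\<lambda>i. g i z))\<bar> \<le> e * \<rho> z" for z
  proof (cases "\<rho> z \<le> R")
    case True
    then have "\<bar>\<phi> (vec_of n (\<lambda>i. fs i z)) - \<phi> (vec_of n (\<lambda>i. g i z))\<bar> < e * weight_inf"
      using M g(2) by (intro \<tau>(2) vec_of_in_Rn) (auto simp: vec_of_def)
    also have "\<dots> \<le> e * \<rho> z" using weight_inf_le \<open>e > 0\<close> by simp
    finally show ?thesis by simp
  next
    case False
    have "\<bar>\<phi> (vec_of n (\<lambda>i. fs i z)) - \<phi> (vec_of n (\<lambda>i. g i z))\<bar> \<le> 2 * B"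
      using abs_triangle_ineq4[of "\<phi> (vec_of n (\<lambda>i. fs i z))" "\<phi> (vec_of n (\<lambda>i. g i z))"]
        B[OF vec_of_in_Rn, of "\<lambda>i. fs i z"] B[OF vec_of_in_Rn, of "\<lambda>i. g i z"]
      by linarith
    also have "\<dots> = e * R" using \<open>e > 0\<close> by (simp add: R_def)
    also have "\<dots> \<le> e * \<rho> z" using False \<open>e > 0\<close> by simp
    finally show ?thesis .
  qed
  ultimately show "\<exists>h. continuous_on UNIV h \<and> bounded (range h) \<and>
      (\<forall>z. \<bar>\<phi> (vec_of n (\<lambda>i. fs i z)) - h z\<bar> \<le> e * \<rho> z)"
    using bounded_comp[of "\<lambda>x i. g i x"] by blast
qed

lemma Brho_compose_trig_poly:
  assumes "g \<in> trig_poly" "f \<in> Brho \<rho>"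
  shows "(\<lambda>x. g (f x)) \<in> Brho \<rho>"
proof -
  have "(\<lambda>x. (\<lambda>v. g (v 0)) (vec_of 1 (\<lambda>i. f x))) \<in> Brho \<rho>"
    using assms
    by (intro Brho_compose smooth_Rn_continuous_on smooth_Rn_trig_poly bounded_trig_poly_Rn) auto
  then show ?thesis by (simp add: vec_of_def)
qed

lemma Brho_Urysohn:
  assumes "completely_regular_space (euclidean :: 'a topology)" "open B" "p \<in> B"
  obtains f where "f \<in> Brho \<rho>" "f p = 0" "\<And>z. z \<notin> B \<Longrightarrow> f z = 1"
proof -
  have "closedin euclidean (- B)" using assms(2) by (simp add: closed_closedin[symmetric] open_closed[symmetric])
  then obtain f :: "'a \<Rightarrow> real" where f: "continuous_map euclidean (top_of_set {0..1}) f"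
      "f p = 0" "f ` (- B) \<subseteq> {1}"
    using assms(1,3) unfolding completely_regular_space_def by force
  then have "continuous_on UNIV f" "range f \<subseteq> {0..1}"
    by (auto simp: continuous_map_in_subtopology)
  then have "f \<in> Brho \<rho>"
    by (intro Brho_if_bounded_continuous) (auto intro: bounded_subset[OF bounded_closed_interval])
  then show ?thesis using that f(2,3) by blast
qed

lemma composition_rep_unique:
  assumes "completely_regular_space (euclidean :: 'a topology)"
    and "composition_rep \<rho> P \<psi>1" "composition_rep \<rho> P \<psi>2"
  shows "\<psi>1 = \<psi>2"
proof
  fix x
  show "\<psi>1 x = \<psi>2 x"
  proof (rule ccontr)
    assume "\<psi>1 x \<noteq> \<psi>2 x"
    have "closedin euclidean {\<psi>2 x}"
      using closedin_t1_singleton[OF Hausdorff_imp_t1_space[OF Hausdorff]] by simp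
    then have "open (- {\<psi>2 x})" by (metis closed_closedin open_Compl)
    moreover have "\<psi>1 x \<in> - {\<psi>2 x}" using \<open>\<psi>1 x \<noteq> \<psi>2 x\<close> by simp
    ultimately obtain f where "f \<in> Brho \<rho>" "f (\<psi>1 x) = 0" "f (\<psi>2 x) = 1"
      using Brho_Urysohn[OF assms(1)] by blast
    moreover have "P f = f \<circ> \<psi>1" "P f = f \<circ> \<psi>2"
      using assms(2,3) \<open>f \<in> Brho \<rho>\<close> unfolding composition_rep_def by blast+
    ultimately show False by (metis comp_apply zero_neq_one)
  qed
qed

text \<open>Urysohn functions detect neighbourhoods of \<open>\<psi> x\<^sub>0\<close>, and their pull-backs are continuous
  on sublevel sets.\<close>
lemma continuous_on_sublevel_if_composition_closed:
  assumes "completely_regular_space (euclidean :: 'a topology)"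
    and "\<And>f. f \<in> Brho \<rho> \<Longrightarrow> f \<circ> \<psi> \<in> Brho \<rho>"
  shows "continuous_on {x. \<rho> x \<le> R} \<psi>"
  unfolding continuous_on_open_invariant
proof (intro allI impI)
  let ?S = "{x. \<rho> x \<le> R}"
  fix B :: "'a set" assume "open B"
  have "\<exists>A. open A \<and> x0 \<in> A \<and> A \<inter> ?S \<subseteq> \<psi> -` B"
    if x0: "x0 \<in> ?S" "\<psi> x0 \<in> B" for x0
  proof -
    obtain f where f: "f \<in> Brho \<rho>" "f (\<psi> x0) = 0" "\<And>z. z \<notin> B \<Longrightarrow> f z = 1"
      using Brho_Urysohn[OF assms(1) \<open>open B\<close> x0(2)] by blast
    have "continuous_on ?S (f \<circ> \<psi>)"
      by (rule Brho_continuous_on_sublevel[OF assms(2)[OF f(1)]])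
    then obtain A where A: "open A" "A \<inter> ?S = (f \<circ> \<psi>) -` {..<1} \<inter> ?S"
      unfolding continuous_on_open_invariant by (meson open_lessThan)
    have "x0 \<in> A" using A(2) x0(1) f(2) by auto
    moreover have "A \<inter> ?S \<subseteq> \<psi> -` B"
    proof
      fix z assume "z \<in> A \<inter> ?S"
      then have "f (\<psi> z) < 1" using A(2) by auto
      then show "z \<in> \<psi> -` B" using f(3) by force
    qed
    ultimately show ?thesis using A(1) by blast
  qed
  then obtain A where A: "\<And>x0. x0 \<in> ?S \<Longrightarrow> \<psi> x0 \<in> B \<Longrightarrow> open (A x0) \<and> x0 \<in> A x0 \<and> A x0 \<inter> ?S \<subseteq> \<psi> -` B"
    by metis
  show "\<exists>U. open U \<and> U \<inter> ?S = \<psi> -` B \<inter> ?S"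
    by (rule exI[of _ "\<Union>x0\<in>?S \<inter> \<psi> -` B. A x0"]) (use A in blast)
qed

lemma wnorm_comp_diff_less:
  assumes "f \<in> Brho \<rho>" "g \<in> Brho \<rho>" "\<And>z. \<rho> (\<psi> z) \<le> C * \<rho> z" "C > 0"
    and "wnorm \<rho> (\<lambda>x. g x - f x) < e / C"
  shows "wnorm \<rho> (\<lambda>x. g (\<psi> x) - f (\<psi> x)) < e"
proof -
  let ?d = "\<lambda>x. g x - f x"
  have d: "wfinite \<rho> ?d" using assms(1,2) by (intro Brho_imp_wfinite Brho_diff)
  have "\<bar>?d (\<psi> z)\<bar> \<le> wnorm \<rho> ?d * C * \<rho> z" for z
  proof -
    have "\<bar>?d (\<psi> z)\<bar> \<le> wnorm \<rho> ?d * \<rho> (\<psi> z)" by (rule abs_le_wnorm_mult[OF d])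
    also have "\<dots> \<le> wnorm \<rho> ?d * (C * \<rho> z)"
      using assms(3) wnorm_nonneg[OF d] by (rule mult_left_mono)
    finally show ?thesis by (simp add: mult.assoc)
  qed
  then have "wnorm \<rho> (\<lambda>x. g (\<psi> x) - f (\<psi> x)) \<le> wnorm \<rho> ?d * C" by (rule wnorm_le)
  also have "\<dots> < e" using assms(4,5) by (simp add: pos_less_divide_eq)
  finally show ?thesis .
qed

lemma composition_rep_imp_smooth_op_alg_hom:
  assumes "\<forall>f\<in>Brho \<rho>. P f \<in> Brho \<rho>" and "composition_rep \<rho> P \<psi>"
  shows "smooth_op_alg_hom \<rho> P"
proof -
  have P: "\<And>f. f \<in> Brho \<rho> \<Longrightarrow> P f = f \<circ> \<psi>"
    using assms(2) unfolding composition_rep_def by blast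
  have "bdd_above (range (\<lambda>x. \<rho> (\<psi> x) / \<rho> x))"
    using assms(2) by (simp add: composition_rep_def)
  then obtain M where M: "\<And>z. \<rho> (\<psi> z) / \<rho> z \<le> M" by (auto simp: bdd_above_def)
  have C: "\<rho> (\<psi> z) \<le> (\<bar>M\<bar> + 1) * \<rho> z" for z
  proof -
    have "\<rho> (\<psi> z) \<le> M * \<rho> z" using M[of z] weight_pos[of z] by (simp add: pos_divide_le_eq)
    also have "\<dots> \<le> (\<bar>M\<bar> + 1) * \<rho> z" using weight_pos[of z] by (intro mult_right_mono) auto
    finally show ?thesis .
  qed
  have "\<exists>\<delta>>0. \<forall>g\<in>Brho \<rho>. wnorm \<rho> (\<lambda>x. g x - f x) < \<delta> \<longrightarrow> wnorm \<rho> (\<lambda>x. P g x - P f x) < e"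
    if "f \<in> Brho \<rho>" "e > 0" for f e
    using wnorm_comp_diff_less[OF that(1) _ C] P that
    by (intro exI[of _ "e / (\<bar>M\<bar> + 1)"]) (auto simp: o_def)
  moreover have "P (\<lambda>x. \<phi> (vec_of n (\<lambda>i. fs i x))) = (\<lambda>x. \<phi> (vec_of n (\<lambda>i. P (fs i) x)))"
    if "smooth_Rn n \<phi>" "bounded (\<phi> ` Rn n)" "\<forall>i<n. fs i \<in> Brho \<rho>" for n \<phi> fs
  proof -
    have "(\<lambda>x. \<phi> (vec_of n (\<lambda>i. fs i x))) \<in> Brho \<rho>"
      using that by (intro Brho_compose smooth_Rn_continuous_on) auto
    moreover have "vec_of n (\<lambda>i. fs i (\<psi> x)) = vec_of n (\<lambda>i. P (fs i) x)" for x
      using P that(3) by (auto simp: vec_of_def)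
    ultimately show ?thesis using P by auto
  qed
  ultimately show ?thesis
    using assms(1) P Brho_lincomb unfolding smooth_op_alg_hom_def by (auto simp: o_def)
qed

end

locale smooth_hom = weighted_space +
  fixes P :: "('a \<Rightarrow> real) \<Rightarrow> ('a \<Rightarrow> real)"
  assumes hom: "smooth_op_alg_hom \<rho> P"
begin

lemma P_Brho: "f \<in> Brho \<rho> \<Longrightarrow> P f \<in> Brho \<rho>"
  using hom unfolding smooth_op_alg_hom_def by blast

lemma P_lincomb:
  "f \<in> Brho \<rho> \<Longrightarrow> g \<in> Brho \<rho> \<Longrightarrow> P (\<lambda>x. a * f x + b * g x) = (\<lambda>x. a * P f x + b * P g x)"
  using hom unfolding smooth_op_alg_hom_def by blast

lemma P_continuous:
  "f \<in> Brho \<rho> \<Longrightarrow> e > 0 \<Longrightarrow>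
    \<exists>d>0. \<forall>g\<in>Brho \<rho>. wnorm \<rho> (\<lambda>x. g x - f x) < d \<longrightarrow> wnorm \<rho> (\<lambda>x. P g x - P f x) < e"
  using hom unfolding smooth_op_alg_hom_def by blast

lemma P_scale: "f \<in> Brho \<rho> \<Longrightarrow> P (\<lambda>x. c * f x) = (\<lambda>x. c * P f x)"
  using P_lincomb[of f f c 0] by simp

lemma P_compose_smooth:
  "smooth_Rn n \<phi> \<Longrightarrow> bounded (\<phi> ` Rn n) \<Longrightarrow> (\<And>i. i < n \<Longrightarrow> fs i \<in> Brho \<rho>) \<Longrightarrow>
    P (\<lambda>x. \<phi> (vec_of n (\<lambda>i. fs i x))) = (\<lambda>x. \<phi> (vec_of n (\<lambda>i. P (fs i) x)))"
  using hom unfolding smooth_op_alg_hom_def by blast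

lemma P_compose_trig_poly:
  assumes "g \<in> trig_poly" "f \<in> Brho \<rho>"
  shows "P (\<lambda>x. g (f x)) = (\<lambda>x. g (P f x))"
proof -
  have "P (\<lambda>x. (\<lambda>v. g (v 0)) (vec_of 1 (\<lambda>i. f x))) = (\<lambda>x. (\<lambda>v. g (v 0)) (vec_of 1 (\<lambda>i. P f x)))"
    using smooth_Rn_trig_poly[OF assms(1)] bounded_trig_poly_Rn[OF assms(1)] assms(2)
    by (intro P_compose_smooth)
  then show ?thesis by (simp add: vec_of_def)
qed

lemma P_const: "P (\<lambda>x. c) = (\<lambda>x. c)"
  using P_compose_trig_poly[OF trig_poly.const[of c] Brho_const[of 0]] by simp

lemma P_sum:
  "finite Y \<Longrightarrow> (\<And>y. y \<in> Y \<Longrightarrow> F y \<in> Brho \<rho>) \<Longrightarrow> P (\<lambda>x. \<Sum>y\<in>Y. F y x) = (\<lambda>x. \<Sum>y\<in>Y. P (F y) x)"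
proof (induction Y rule: finite_induct)
  case empty
  then show ?case using P_const[of 0] by simp
next
  case (insert y Y)
  have "(\<lambda>x. \<Sum>y\<in>Y. F y x) \<in> Brho \<rho>"
    by (rule Brho_sum[OF insert.hyps(1)]) (use insert.prems in auto)
  then have "P (\<lambda>x. 1 * F y x + 1 * (\<Sum>y\<in>Y. F y x)) = (\<lambda>x. 1 * P (F y) x + 1 * P (\<lambda>x. \<Sum>y\<in>Y. F y x) x)"
    using insert.prems by (intro P_lincomb) auto
  then show ?case using insert by simp
qed

text \<open>Continuity at \<open>0\<close> plus homogeneity: rescale \<open>g\<close> into the \<open>\<delta>\<close>-ball on which \<open>P\<close> has
  weighted norm below \<open>1\<close>.\<close>
lemma P_bounded: "\<exists>L>0. \<forall>g\<in>Brho \<rho>. \<forall>x. \<bar>P g x\<bar> \<le> L * wnorm \<rho> g * \<rho> x"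
proof -
  obtain \<delta> where \<delta>: "\<delta> > 0" "\<And>g. g \<in> Brho \<rho> \<Longrightarrow> wnorm \<rho> g < \<delta> \<Longrightarrow> wnorm \<rho> (P g) < 1"
    using P_continuous[OF Brho_const[of 0], of 1] by (auto simp: P_const)
  have "\<bar>P g x\<bar> \<le> 2 / \<delta> * wnorm \<rho> g * \<rho> x" if g: "g \<in> Brho \<rho>" for g x
  proof -
    have "\<bar>P g x\<bar> / (2 / \<delta> * \<rho> x) \<le> c" if c: "wnorm \<rho> g < c" for c
    proof -
      have "c > 0" using c wnorm_nonneg[OF Brho_imp_wfinite[OF g]] by linarith
      define s where "s = \<delta> / (2 * c)"
      have s: "s > 0" "s * c < \<delta>" using \<delta>(1) \<open>c > 0\<close> by (auto simp: s_def)
      have sg: "(\<lambda>z. s * g z) \<in> Brho \<rho>" using Brho_lincomb[OF g g, of s 0] by simp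
      have "wnorm \<rho> (\<lambda>z. s * g z) \<le> s * wnorm \<rho> g"
        using abs_le_wnorm_mult[OF Brho_imp_wfinite[OF g]] s(1)
        by (intro wnorm_le) (simp add: abs_mult mult.assoc)
      also have "\<dots> < \<delta>" using s c by (meson less_trans mult_strict_left_mono)
      finally have "wnorm \<rho> (P (\<lambda>z. s * g z)) < 1" by (rule \<delta>(2)[OF sg])
      then have "wnorm \<rho> (P (\<lambda>z. s * g z)) * \<rho> x < \<rho> x"
        using weight_pos[of x] by simp
      then have "s * \<bar>P g x\<bar> \<le> \<rho> x"
        using abs_le_wnorm_mult[OF Brho_imp_wfinite[OF P_Brho[OF sg]], of x] s(1) g
        by (simp add: P_scale abs_mult)
      then show ?thesis
        using s(1) \<delta>(1) \<open>c > 0\<close> weight_pos[of x] by (simp add: s_def field_simps)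
    qed
    then have "\<bar>P g x\<bar> / (2 / \<delta> * \<rho> x) \<le> wnorm \<rho> g" by (rule dense_ge)
    then show ?thesis using \<delta>(1) weight_pos[of x] by (simp add: field_simps)
  qed
  then show ?thesis using \<delta>(1) by (intro exI[of _ "2 / \<delta>"]) auto
qed

lemma separating_function_vanishing_under_P:
  assumes "f \<in> Brho \<rho>" "P f x \<noteq> f y"
  shows "\<exists>g\<in>Brho \<rho>. (\<forall>z. 0 \<le> g z \<and> g z \<le> 1) \<and> g y > 0 \<and> P g x = 0"
proof -
  define a where "a = P f x"
  define k where "k = 1 / \<bar>f y - a\<bar>"
  define s where "s t = sin (k * t + - k * a) ^ 2" for t
  have s: "s \<in> trig_poly" unfolding s_def by (intro trig_poly_power trig_poly.sin)
  have "k * f y + - k * a = (f y - a) / \<bar>f y - a\<bar>"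
    by (simp add: k_def diff_divide_distrib)
  moreover have "d / \<bar>d\<bar> = 1 \<or> d / \<bar>d\<bar> = - 1" if "d \<noteq> 0" for d :: real
    using that by (cases "d > 0") (auto simp: abs_if)
  ultimately have "k * f y + - k * a = 1 \<or> k * f y + - k * a = - 1"
    using assms(2) by (simp add: a_def)
  moreover have "sin (1::real) > 0" using pi_gt3 sin_gt_zero[of 1] by simp
  ultimately have "sin (k * f y + - k * a) \<noteq> 0" by auto
  then have "s (f y) > 0" by (simp add: s_def)
  moreover have "P (\<lambda>z. s (f z)) x = 0"
    using P_compose_trig_poly[OF s assms(1)] by (simp add: s_def a_def)
  moreover have "0 \<le> s t" "s t \<le> 1" for t
    by (simp_all add: s_def abs_square_le_1)
  ultimately show ?thesis
    using Brho_compose_trig_poly[OF s assms(1)] by (intro bexI[of _ "\<lambda>z. s (f z)"]) auto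
qed

lemma vanishing_function_positive_on_sublevel:
  assumes "\<And>y. \<rho> y \<le> R \<Longrightarrow> \<exists>f\<in>Brho \<rho>. P f x \<noteq> f y"
  obtains F where "F \<in> Brho \<rho>" "\<And>z. 0 \<le> F z" "bounded (range F)"
    "\<And>z. \<rho> z \<le> R \<Longrightarrow> F z > 0" "P F x = 0"
proof -
  let ?K = "{z. \<rho> z \<le> R}"
  have "\<forall>y\<in>?K. \<exists>g. g \<in> Brho \<rho> \<and> (\<forall>z. 0 \<le> g z \<and> g z \<le> 1) \<and> g y > 0 \<and> P g x = 0"
  proof
    fix y assume "y \<in> ?K"
    then obtain f where "f \<in> Brho \<rho>" "P f x \<noteq> f y" using assms by auto
    then have "\<exists>g\<in>Brho \<rho>. (\<forall>z. 0 \<le> g z \<and> g z \<le> 1) \<and> g y > 0 \<and> P g x = 0"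
      by (rule separating_function_vanishing_under_P)
    then show "\<exists>g. g \<in> Brho \<rho> \<and> (\<forall>z. 0 \<le> g z \<and> g z \<le> 1) \<and> g y > 0 \<and> P g x = 0"
      by blast
  qed
  then have "\<exists>g. \<forall>y\<in>?K. g y \<in> Brho \<rho> \<and> (\<forall>z. 0 \<le> g y z \<and> g y z \<le> 1) \<and> g y y > 0 \<and> P (g y) x = 0"
    by (rule bchoice)
  then obtain g where "\<forall>y\<in>?K. g y \<in> Brho \<rho> \<and> (\<forall>z. 0 \<le> g y z \<and> g y z \<le> 1) \<and> g y y > 0 \<and> P (g y) x = 0"
    by blast
  then have g: "\<And>y. \<rho> y \<le> R \<Longrightarrow> g y \<in> Brho \<rho>" "\<And>y z. \<rho> y \<le> R \<Longrightarrow> 0 \<le> g y z"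
    "\<And>y z. \<rho> y \<le> R \<Longrightarrow> g y z \<le> 1" "\<And>y. \<rho> y \<le> R \<Longrightarrow> g y y > 0"
    "\<And>y. \<rho> y \<le> R \<Longrightarrow> P (g y) x = 0"
    by auto
  obtain Y where Y: "finite Y" "Y \<subseteq> ?K" "\<And>z. \<rho> z \<le> R \<Longrightarrow> (\<Sum>y\<in>Y. g y z) > 0"
    using Brho_finite_sum_positive_on_sublevel[OF g(1,2,4)] by blast
  define F where "F = (\<lambda>z. \<Sum>y\<in>Y. g y z)"
  have "F \<in> Brho \<rho>" unfolding F_def using Y g(1) by (intro Brho_sum) auto
  moreover have "0 \<le> F z" "F z \<le> card Y" for z
    using Y g(2,3) sum_bounded_above[of Y "\<lambda>y. g y z" 1] unfolding F_def
    by (auto simp: subset_iff intro: sum_nonneg)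
  then have "bounded (range F)" by (intro boundedI[of _ "card Y"]) auto
  moreover have "P F x = 0"
    using P_sum[OF Y(1), of g] Y(2) g(1,5) by (auto simp: F_def subset_iff)
  ultimately show ?thesis using that \<open>\<And>z. 0 \<le> F z\<close> Y(3) by (simp add: F_def)
qed

text \<open>\<open>cos(c F)\<^sup>n\<close> is \<open>1\<close> where \<open>F\<close> vanishes, so \<open>P\<close> maps it to \<open>1\<close> at \<open>x\<close>, but it is uniformly
  small where \<open>F \<ge> \<delta>\<close>.\<close>
lemma peak_function:
  assumes F: "F \<in> Brho \<rho>" "\<And>z. 0 \<le> F z" "bounded (range F)" "P F x = 0"
    and \<delta>: "\<delta> > 0" "\<And>z. \<rho> z \<le> R \<Longrightarrow> \<delta> \<le> F z"
    and "\<eta> > 0"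
  obtains h where "h \<in> Brho \<rho>" "\<And>z. \<bar>h z\<bar> \<le> 1" "\<And>z. \<rho> z \<le> R \<Longrightarrow> \<bar>h z\<bar> \<le> \<eta>" "P h x = 1"
proof -
  obtain m where "\<forall>z. \<bar>F z\<bar> \<le> m" using F(3) by (auto simp: bounded_iff)
  then have m: "\<And>z. F z \<le> m" by (simp add: abs_le_iff)
  then have "m \<ge> 0" using F(2) order_trans by blast
  define c where "c = pi / (2 * (m + 1))"
  define d where "d = c * min \<delta> 1"
  have c: "c > 0" "c \<le> pi / 2" "c * m \<le> pi / 2" using \<open>m \<ge> 0\<close> by (auto simp: c_def field_simps)
  have "d \<le> c" using c(1) mult_left_mono[of "min \<delta> 1" 1 c] by (simp add: d_def)
  moreover have "d > 0" using c(1) \<delta>(1) by (simp add: d_def)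
  ultimately have d: "d > 0" "d \<le> pi / 2" using c(2) by linarith+
  then have "cos d < 1" using cos_monotone_0_pi[of 0 d] pi_gt3 by simp
  then obtain n where n: "cos d ^ n < \<eta>" using real_arch_pow_inv \<open>\<eta> > 0\<close> by blast
  define g where "g t = cos (c * t) ^ n" for t
  have g: "g \<in> trig_poly"
    using trig_poly_power[OF trig_poly_cos[of c 0]] by (simp add: g_def[abs_def])
  have "\<bar>g (F z)\<bar> \<le> \<eta>" if "\<rho> z \<le> R" for z
  proof -
    have "d \<le> c * F z" using \<delta>(2)[OF that] c(1) by (auto simp: d_def intro: mult_left_mono)
    moreover have "c * F z \<le> pi / 2" using m[of z] c by (meson mult_left_mono less_imp_le order_trans)
    ultimately have "0 \<le> cos (c * F z)" "cos (c * F z) \<le> cos d"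
      using d by (auto intro!: cos_ge_zero cos_monotone_0_pi_le)
    then have "cos (c * F z) ^ n \<le> cos d ^ n" by (simp add: power_mono)
    then show ?thesis using n \<open>0 \<le> cos (c * F z)\<close> by (simp add: g_def)
  qed
  moreover have "\<bar>g t\<bar> \<le> 1" for t by (simp add: g_def power_abs power_le_one)
  moreover have "P (\<lambda>z. g (F z)) x = 1"
    using P_compose_trig_poly[OF g F(1)] F(4) by (simp add: g_def)
  ultimately show ?thesis using that Brho_compose_trig_poly[OF g F(1)] by blast
qed

context
  fixes L :: real
  assumes L_pos: "L > 0"
    and P_le: "\<And>g x. g \<in> Brho \<rho> \<Longrightarrow> \<bar>P g x\<bar> \<le> L * wnorm \<rho> g * \<rho> x"
begin

lemma P_small_if_small_on_sublevel:
  assumes "h \<in> Brho \<rho>" "\<And>z. \<bar>h z\<bar> \<le> 1"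
    and "\<And>z. \<rho> z \<le> 2 * L * \<rho> x \<Longrightarrow> \<bar>h z\<bar> \<le> weight_inf / (2 * L * \<rho> x)"
  shows "\<bar>P h x\<bar> \<le> 1 / 2"
proof -
  define q where "q = 2 * L * \<rho> x"
  have q: "q > 0" using L_pos weight_pos[of x] by (simp add: q_def)
  have "\<bar>h z\<bar> \<le> 1 / q * \<rho> z" for z
  proof (cases "\<rho> z \<le> q")
    case True
    then have "\<bar>h z\<bar> \<le> weight_inf / q" using assms(3) by (simp add: q_def)
    also have "\<dots> \<le> \<rho> z / q" using weight_inf_le q by (simp add: divide_right_mono)
    finally show ?thesis by simp
  next
    case False
    then have "1 \<le> \<rho> z / q" using q by simp
    then show ?thesis using assms(2)[of z] by simp
  qed
  then have "wnorm \<rho> h \<le> 1 / q" by (rule wnorm_le)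
  then have "\<bar>P h x\<bar> \<le> L * (1 / q) * \<rho> x"
    using P_le[OF assms(1), of x] L_pos weight_pos[of x]
    by (meson mult_left_mono mult_right_mono less_imp_le order_trans)
  also have "\<dots> = 1 / 2" using L_pos weight_pos[of x] by (simp add: q_def)
  finally show ?thesis .
qed

lemma point_evaluation: "\<exists>y. \<rho> y \<le> 2 * L * \<rho> x \<and> (\<forall>f\<in>Brho \<rho>. P f x = f y)"
proof (rule ccontr)
  define R where "R = 2 * L * \<rho> x"
  assume "\<not> ?thesis"
  then have no_point: "\<And>y. \<rho> y \<le> R \<Longrightarrow> \<exists>f\<in>Brho \<rho>. P f x \<noteq> f y" by (auto simp: R_def)
  obtain F where F: "F \<in> Brho \<rho>" "\<And>z. 0 \<le> F z" "bounded (range F)"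
    "\<And>z. \<rho> z \<le> R \<Longrightarrow> F z > 0" "P F x = 0"
    using vanishing_function_positive_on_sublevel[OF no_point] by blast
  obtain \<delta> where "\<delta> > 0" "\<And>z. \<rho> z \<le> R \<Longrightarrow> \<delta> \<le> F z"
    using Brho_positive_on_sublevel_bounded_below[OF F(1,4)] by blast
  moreover have "weight_inf / R > 0" using weight_inf_pos L_pos weight_pos[of x] by (simp add: R_def)
  ultimately obtain h where h: "h \<in> Brho \<rho>" "\<And>z. \<bar>h z\<bar> \<le> 1"
      "\<And>z. \<rho> z \<le> R \<Longrightarrow> \<bar>h z\<bar> \<le> weight_inf / R" "P h x = 1"
    using peak_function[OF F(1,2,3,5)] by blast
  then have "\<bar>P h x\<bar> \<le> 1 / 2" by (intro P_small_if_small_on_sublevel) (auto simp: R_def)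
  then show False using h(4) by simp
qed

end

lemma composition_rep_exists:
  assumes "completely_regular_space (euclidean :: 'a topology)"
  shows "\<exists>\<psi>. composition_rep \<rho> P \<psi>"
proof -
  obtain L where L: "L > 0" "\<And>g x. g \<in> Brho \<rho> \<Longrightarrow> \<bar>P g x\<bar> \<le> L * wnorm \<rho> g * \<rho> x"
    using P_bounded by blast
  have "\<forall>x. \<exists>y. \<rho> y \<le> 2 * L * \<rho> x \<and> (\<forall>f\<in>Brho \<rho>. P f x = f y)"
    using point_evaluation[OF L] by blast
  then have "\<exists>\<psi>. \<forall>x. \<rho> (\<psi> x) \<le> 2 * L * \<rho> x \<and> (\<forall>f\<in>Brho \<rho>. P f x = f (\<psi> x))"
    by (rule choice)
  then obtain \<psi> where "\<forall>x. \<rho> (\<psi> x) \<le> 2 * L * \<rho> x \<and> (\<forall>f\<in>Brho \<rho>. P f x = f (\<psi> x))"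
    by blast
  then have \<psi>: "\<And>x. \<rho> (\<psi> x) \<le> 2 * L * \<rho> x" "\<And>f. f \<in> Brho \<rho> \<Longrightarrow> P f = f \<circ> \<psi>"
    by (auto simp: fun_eq_iff)
  have "continuous_on (sublevel \<rho> R) \<psi>" for R
    unfolding sublevel_def using \<psi>(2) P_Brho
    by (intro continuous_on_sublevel_if_composition_closed[OF assms]) simp
  moreover have "bdd_above (range (\<lambda>x. \<rho> (\<psi> x) / \<rho> x))"
    using \<psi>(1) weight_pos by (intro bdd_aboveI[of _ "2 * L"]) (auto simp: divide_le_eq)
  ultimately show ?thesis using \<psi>(2) unfolding composition_rep_def by blast
qed

end

theorem mainTheorem14:
  fixes \<rho> :: "'a::topological_space \<Rightarrow> real"
    and P :: "('a \<Rightarrow> real) \<Rightarrow> ('a \<Rightarrow> real)"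
  assumes "completely_regular_space (euclidean :: 'a topology)"
    and "Hausdorff_space (euclidean :: 'a topology)"
    and "admissible_weight \<rho>"
    and "\<forall>f\<in>Brho \<rho>. P f \<in> Brho \<rho>"
  shows "(smooth_op_alg_hom \<rho> P \<longleftrightarrow> (\<exists>\<psi>. composition_rep \<rho> P \<psi>))
       \<and> (smooth_op_alg_hom \<rho> P \<longrightarrow> (\<exists>!\<psi>. composition_rep \<rho> P \<psi>))"
proof -
  interpret weighted_space \<rho> using assms(2,3) by unfold_locales
  have "\<exists>\<psi>. composition_rep \<rho> P \<psi>" if "smooth_op_alg_hom \<rho> P"
  proof -
    interpret smooth_hom \<rho> P using that by unfold_locales
    show ?thesis using composition_rep_exists[OF assms(1)] .
  qed
  then show ?thesis
    using composition_rep_imp_smooth_op_alg_hom[OF assms(4)] composition_rep_unique[OF assms(1)]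
    by blast
qed

end
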